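(* Let $(V,L,\varphi,E)$ be a valuation system. Then $\varphi$ is $\Pi$-extendible if and only if there exist a sublattice $C$ of $V$ and a valuation $\psi:C\to E$ such that $(V,C,\psi,E)$ is $\Pi$-complete and $\psi$ extends $\varphi$.
   Context: A valuation system $(V,L,\varphi,E)$ consists of: (i) a lattice $V$ which is $\sigma$-distributive, i.e. for every $a\in V$ and every sequence $(b_n)$ in $V$ whose infimum exists, $\bigwedge_n(a\vee b_n)$ exists and equals $a\vee\bigwedge_n b_n$, and dually for suprema; (ii) a sublattice $L$ of $V$; (iii) a partially ordered abelian group $E$ which is R-complete: whenever $x_1\ge x_2\ge\cdots$ and $y_1\ge y_2\ge\cdots$ in $E$ are such that $\bigwedge_n(x_n+y_n)$ exists, then $\bigwedge_n x_n$ and $\bigwedge_n y_n$ exist, and dually for increasing sequences and suprema; (iv) a valuation $\varphi:L\to E$, i.e. an order-preserving map with $\varphi(a\wedge b)+\varphi(a\vee b)=\varphi(a)+\varphi(b)$. A map $\psi:C\to E$ extends $\varphi:L\to E$ if $L\subseteq C$ and $\psi|_L=\varphi$. A decreasing sequence $a_1\ge a_2\ge\cdots$ in $L$ is $\varphi$-convergent if $\bigwedge_n a_n$ exists in $V$ and $\bigwedge_n\varphi(a_n)$ exists in $E$. The system is $\Pi$-complete if for every $\varphi$-convergent decreasing sequence $(a_n)$ in $L$ we have $\bigwedge_n a_n\in L$ and $\varphi(\bigwedge_n a_n)=\bigwedge_n\varphi(a_n)$. Let $\Pi L:=\{\bigwedge_n a_n: (a_n)\text{ a }\varphi\text{-convergent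 decreasing sequence in }L\}$ (a sublattice of $V$). $\varphi$ is $\Pi$-extendible if there is a valuation $\Pi\varphi:\Pi L\to E$ with $\Pi\varphi(\bigwedge_n a_n)=\bigwedge_n\varphi(a_n)$ for every $\varphi$-convergent decreasing sequence $(a_n)$ in $L$. *)

theory Defs
  imports Main
begin

text \<open>The lattice V is the whole type 'v (class lattice); the partially ordered
abelian group E is the whole type 'e (class ordered_ab_group_add).\<close>

definition is_inf :: "'a::order set \<Rightarrow> 'a \<Rightarrow> bool" where
  "is_inf S x \<longleftrightarrow> (\<forall>y\<in>S. x \<le> y) \<and> (\<forall>z. (\<forall>y\<in>S. z \<le> y) \<longrightarrow> z \<le> x)"

definition is_sup :: "'a::order set \<Rightarrow> 'a \<Rightarrow> bool" where
  "is_sup S x \<longleftrightarrow> (\<forall>y\<in>S. y \<le> x) \<and> (\<forall>z. (\<forall>y\<in>S. y \<le> z) \<longrightarrow> x \<le> z)"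

definition sigma_distributive :: "'v::lattice itself \<Rightarrow> bool" where
  "sigma_distributive _ \<longleftrightarrow>
     (\<forall>(a::'v) (b::nat \<Rightarrow> 'v) x. is_inf (range b) x \<longrightarrow>
         is_inf (range (\<lambda>n. sup a (b n))) (sup a x)) \<and>
     (\<forall>(a::'v) (b::nat \<Rightarrow> 'v) x. is_sup (range b) x \<longrightarrow>
         is_sup (range (\<lambda>n. inf a (b n))) (inf a x))"

definition R_complete :: "'e::ordered_ab_group_add itself \<Rightarrow> bool" where
  "R_complete _ \<longleftrightarrow>
     (\<forall>(x::nat \<Rightarrow> 'e) y. antimono x \<and> antimono y \<and> (\<exists>z. is_inf (range (\<lambda>n. x n + y n)) z) \<longrightarrow>
         (\<exists>u. is_inf (range x) u) \<and> (\<exists>v. is_inf (range y) v)) \<and>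
     (\<forall>(x::nat \<Rightarrow> 'e) y. mono x \<and> mono y \<and> (\<exists>z. is_sup (range (\<lambda>n. x n + y n)) z) \<longrightarrow>
         (\<exists>u. is_sup (range x) u) \<and> (\<exists>v. is_sup (range y) v))"

definition sublattice :: "'v::lattice set \<Rightarrow> bool" where
  "sublattice L \<longleftrightarrow> (\<forall>a\<in>L. \<forall>b\<in>L. inf a b \<in> L \<and> sup a b \<in> L)"

definition valuation :: "'v::lattice set \<Rightarrow> ('v \<Rightarrow> 'e::ordered_ab_group_add) \<Rightarrow> bool" where
  "valuation L \<phi> \<longleftrightarrow>
     (\<forall>a\<in>L. \<forall>b\<in>L. a \<le> b \<longrightarrow> \<phi> a \<le> \<phi> b) \<and>
     (\<forall>a\<in>L. \<forall>b\<in>L. \<phi> (inf a b) + \<phi> (sup a b) = \<phi> a + \<phi> b)"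

definition valuation_system ::
  "'v::lattice set \<Rightarrow> ('v \<Rightarrow> 'e::ordered_ab_group_add) \<Rightarrow> bool" where
  "valuation_system L \<phi> \<longleftrightarrow>
     sigma_distributive TYPE('v) \<and> R_complete TYPE('e) \<and> sublattice L \<and> valuation L \<phi>"

definition extends :: "'v set \<Rightarrow> ('v \<Rightarrow> 'e) \<Rightarrow> 'v set \<Rightarrow> ('v \<Rightarrow> 'e) \<Rightarrow> bool" where
  "extends C \<psi> L \<phi> \<longleftrightarrow> L \<subseteq> C \<and> (\<forall>x\<in>L. \<psi> x = \<phi> x)"

definition phi_convergent ::
  "'v::lattice set \<Rightarrow> ('v \<Rightarrow> 'e::ordered_ab_group_add) \<Rightarrow> (nat \<Rightarrow> 'v) \<Rightarrow> bool" where
  "phi_convergent L \<phi> a \<longleftrightarrow>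
     (\<forall>n. a n \<in> L) \<and> antimono a \<and> (\<exists>x. is_inf (range a) x) \<and> (\<exists>e. is_inf (range (\<lambda>n. \<phi> (a n))) e)"

definition Pi_complete :: "'v::lattice set \<Rightarrow> ('v \<Rightarrow> 'e::ordered_ab_group_add) \<Rightarrow> bool" where
  "Pi_complete L \<phi> \<longleftrightarrow>
     (\<forall>a x. phi_convergent L \<phi> a \<and> is_inf (range a) x \<longrightarrow>
        x \<in> L \<and> is_inf (range (\<lambda>n. \<phi> (a n))) (\<phi> x))"

definition PiL :: "'v::lattice set \<Rightarrow> ('v \<Rightarrow> 'e::ordered_ab_group_add) \<Rightarrow> 'v set" where
  "PiL L \<phi> = {x. \<exists>a. phi_convergent L \<phi> a \<and> is_inf (range a) x}"

definition Pi_extendible :: "'v::lattice set \<Rightarrow> ('v \<Rightarrow> 'e::ordered_ab_group_add) \<Rightarrow> bool" where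
  "Pi_extendible L \<phi> \<longleftrightarrow>
     (\<exists>\<psi>::'v \<Rightarrow> 'e. valuation (PiL L \<phi>) \<psi> \<and>
        (\<forall>a x. phi_convergent L \<phi> a \<and> is_inf (range a) x \<longrightarrow>
           is_inf (range (\<lambda>n. \<phi> (a n))) (\<psi> x)))"

end

theory Submission
  imports Defs
begin

text \<open>If \<open>\<Pi>\<phi>\<close> exists, then \<open>(V, \<Pi>L, \<Pi>\<phi>, E)\<close> is itself \<open>\<Pi>\<close>-complete: a decreasing
sequence \<open>X\<^sub>k\<close> in \<open>\<Pi>L\<close> is approximated by sequences \<open>A\<^sub>k\<close> in \<open>L\<close>, which can be chosen
decreasing in \<open>k\<close> as well (replace \<open>A\<^sub>k\<close> by \<open>A\<^sub>0 \<and> \<dots> \<and> A\<^sub>k\<close>; meets of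
\<open>\<phi>\<close>-convergent sequences are \<open>\<phi>\<close>-convergent),
and the diagonal \<open>A\<^sub>n n\<close> is a \<open>\<phi>\<close>-convergent sequence in \<open>L\<close> with the same infima.
Conversely, any \<open>\<Pi>\<close>-complete extension \<open>\<psi>\<close> contains \<open>\<Pi>L\<close> and restricts to \<open>\<Pi>\<phi>\<close>.
The sublattice property of \<open>\<Pi>L\<close> is where \<open>\<sigma>\<close>-distributivity of \<open>V\<close> and R-completeness
of \<open>E\<close> enter.\<close>

lemma is_inf_range_iff:
  "is_inf (range f) x \<longleftrightarrow> (\<forall>n. x \<le> f n) \<and> (\<forall>z. (\<forall>n. z \<le> f n) \<longrightarrow> z \<le> x)"
  by (auto simp: is_inf_def)

lemma is_inf_unique: "is_inf S x \<Longrightarrow> is_inf S y \<Longrightarrow> x = y"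
  unfolding is_inf_def by (meson order.antisym)

lemma is_inf_const: "is_inf (range (\<lambda>n. c)) c"
  unfolding is_inf_range_iff by simp

lemma is_inf_add:
  fixes X Y :: "nat \<Rightarrow> 'e::ordered_ab_group_add"
  assumes "antimono X" "antimono Y" "is_inf (range X) u" "is_inf (range Y) v"
  shows "is_inf (range (\<lambda>n. X n + Y n)) (u + v)"
  unfolding is_inf_range_iff
proof (intro conjI allI impI)
  fix n show "u + v \<le> X n + Y n"
    using assms(3,4) by (simp add: is_inf_range_iff add_mono)
next
  fix z assume z: "\<forall>n. z \<le> X n + Y n"
  have "z - Y n \<le> X m" for n m
  proof -
    have "z \<le> X (max m n) + Y (max m n)" using z by blast
    also have "\<dots> \<le> X m + Y n"
      by (intro add_mono antimonoD[OF assms(1)] antimonoD[OF assms(2)]) auto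
    finally show ?thesis by (simp add: diff_le_eq)
  qed
  hence "z - Y n \<le> u" for n using assms(3) by (simp add: is_inf_range_iff)
  hence "z - u \<le> Y n" for n by (metis diff_le_eq le_diff_eq add.commute)
  hence "z - u \<le> v" using assms(4) by (simp add: is_inf_range_iff)
  thus "z \<le> u + v" by (simp add: diff_le_eq add.commute)
qed

lemma is_inf_inf_seq:
  fixes a b :: "nat \<Rightarrow> 'v::lattice"
  assumes "is_inf (range a) x" "is_inf (range b) y"
  shows "is_inf (range (\<lambda>n. inf (a n) (b n))) (inf x y)"
  using assms unfolding is_inf_range_iff by (auto intro: inf_mono le_infI1 le_infI2)

lemma is_inf_sup_seq:
  fixes a b :: "nat \<Rightarrow> 'v::lattice"
  assumes sd: "sigma_distributive TYPE('v)" and "antimono a" "antimono b"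
    and ix: "is_inf (range a) x" and iy: "is_inf (range b) y"
  shows "is_inf (range (\<lambda>n. sup (a n) (b n))) (sup x y)"
  unfolding is_inf_range_iff
proof (intro conjI allI impI)
  fix n show "sup x y \<le> sup (a n) (b n)"
    using ix iy unfolding is_inf_range_iff by (blast intro: sup_mono)
next
  fix z assume z: "\<forall>n. z \<le> sup (a n) (b n)"
  have sup_inf: "is_inf (range (\<lambda>n. sup c (d n))) (sup c w)"
    if "is_inf (range d) w" for c and d :: "nat \<Rightarrow> 'v" and w
    using sd that unfolding sigma_distributive_def by blast
  have "z \<le> sup (a m) (b n)" for m n
  proof -
    have "z \<le> sup (a (max m n)) (b (max m n))" using z by blast
    also have "\<dots> \<le> sup (a m) (b n)"
      by (intro sup_mono antimonoD[OF assms(2)] antimonoD[OF assms(3)]) auto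
    finally show ?thesis .
  qed
  hence "z \<le> sup y (a m)" for m
    using sup_inf[OF iy, of "a m"] by (simp add: is_inf_range_iff sup_commute)
  hence "z \<le> sup y x" using sup_inf[OF ix, of y] by (simp add: is_inf_range_iff)
  thus "z \<le> sup x y" by (simp add: sup_commute)
qed

lemma is_inf_diagonal:
  fixes A :: "nat \<Rightarrow> nat \<Rightarrow> 'a::order"
  assumes anti: "\<And>k m n n'. k \<le> m \<Longrightarrow> n \<le> n' \<Longrightarrow> A m n' \<le> A k n"
    and rows: "\<And>k. is_inf (range (A k)) (X k)" and "is_inf (range X) x"
  shows "is_inf (range (\<lambda>n. A n n)) x"
  unfolding is_inf_range_iff
proof (intro conjI allI impI)
  fix n show "x \<le> A n n"
    using assms(3) rows[of n] by (auto simp: is_inf_range_iff intro: order.trans)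
next
  fix z assume z: "\<forall>n. z \<le> A n n"
  have "z \<le> A k m" for k m
    using z[rule_format, of "max k m"] anti[of k "max k m" m "max k m"] by auto
  hence "z \<le> X k" for k using rows[of k] by (simp add: is_inf_range_iff)
  thus "z \<le> x" using assms(3) by (simp add: is_inf_range_iff)
qed

lemma phi_convergent_const:
  "c \<in> L \<Longrightarrow> phi_convergent L \<phi> (\<lambda>n. c)"
  unfolding phi_convergent_def antimono_def using is_inf_const[of c] is_inf_const[of "\<phi> c"] by blast

lemma subset_PiL: "L \<subseteq> PiL L \<phi>"
  unfolding PiL_def using phi_convergent_const is_inf_const by blast

lemma valuation_antimono_seq:
  "valuation L \<phi> \<Longrightarrow> antimono a \<Longrightarrow> (\<And>n. a n \<in> L) \<Longrightarrow> antimono (\<lambda>n. \<phi> (a n))"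
  unfolding valuation_def antimono_def by blast

lemma valuation_subset: "valuation C \<psi> \<Longrightarrow> D \<subseteq> C \<Longrightarrow> valuation D \<psi>"
  unfolding valuation_def by blast

text \<open>By modularity, \<open>\<phi>(a\<^sub>n \<and> b\<^sub>n) + \<phi>(a\<^sub>n \<or> b\<^sub>n) = \<phi>(a\<^sub>n) + \<phi>(b\<^sub>n)\<close> has an infimum,
so R-completeness yields the infima of both summands.\<close>

lemma phi_convergent_inf_sup_values:
  fixes L :: "'v::lattice set" and \<phi> :: "'v \<Rightarrow> 'e::ordered_ab_group_add"
  assumes vs: "valuation_system L \<phi>"
    and a: "phi_convergent L \<phi> a" and b: "phi_convergent L \<phi> b"
  shows "(\<exists>e. is_inf (range (\<lambda>n. \<phi> (inf (a n) (b n)))) e) \<and>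
         (\<exists>e. is_inf (range (\<lambda>n. \<phi> (sup (a n) (b n)))) e)"
proof -
  have rc: "R_complete TYPE('e)" and sl: "sublattice L" and val: "valuation L \<phi>"
    using vs by (auto simp: valuation_system_def)
  have aL: "\<And>n. a n \<in> L" and bL: "\<And>n. b n \<in> L" and am: "antimono a" and bm: "antimono b"
    using a b by (auto simp: phi_convergent_def)
  obtain u v where u: "is_inf (range (\<lambda>n. \<phi> (a n))) u" and v: "is_inf (range (\<lambda>n. \<phi> (b n))) v"
    using a b by (auto simp: phi_convergent_def)
  have infL: "inf (a n) (b n) \<in> L" and supL: "sup (a n) (b n) \<in> L" for n
    using sl aL bL by (auto simp: sublattice_def)
  have "antimono (\<lambda>n. inf (a n) (b n))" "antimono (\<lambda>n. sup (a n) (b n))"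
    using am bm unfolding antimono_def by (meson inf_mono sup_mono)+
  hence anti: "antimono (\<lambda>n. \<phi> (inf (a n) (b n)))" "antimono (\<lambda>n. \<phi> (sup (a n) (b n)))"
    using valuation_antimono_seq[OF val] infL supL by blast+
  have "is_inf (range (\<lambda>n. \<phi> (a n) + \<phi> (b n))) (u + v)"
    using is_inf_add[OF valuation_antimono_seq[OF val am aL] valuation_antimono_seq[OF val bm bL] u v] .
  hence "is_inf (range (\<lambda>n. \<phi> (inf (a n) (b n)) + \<phi> (sup (a n) (b n)))) (u + v)"
    using val aL bL by (simp add: valuation_def)
  thus ?thesis
    using rc anti unfolding R_complete_def by blast
qed

lemma phi_convergent_inf:
  assumes "valuation_system L \<phi>" "phi_convergent L \<phi> a" "phi_convergent L \<phi> b"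
    and "is_inf (range a) x" "is_inf (range b) y"
  shows "phi_convergent L \<phi> (\<lambda>n. inf (a n) (b n))"
proof -
  have "sublattice L" using assms(1) by (simp add: valuation_system_def)
  moreover have "antimono (\<lambda>n. inf (a n) (b n))"
    using assms(2,3) unfolding phi_convergent_def antimono_def by (meson inf_mono)
  moreover have "is_inf (range (\<lambda>n. inf (a n) (b n))) (inf x y)"
    using assms(4,5) by (rule is_inf_inf_seq)
  ultimately show ?thesis
    using assms(2,3) phi_convergent_inf_sup_values[OF assms(1-3)]
    unfolding phi_convergent_def sublattice_def by blast
qed

lemma phi_convergent_sup:
  fixes L :: "'v::lattice set" and \<phi> :: "'v \<Rightarrow> 'e::ordered_ab_group_add"
  assumes "valuation_system L \<phi>" "phi_convergent L \<phi> a" "phi_convergent L \<phi> b"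
    and "is_inf (range a) x" "is_inf (range b) y"
  shows "phi_convergent L \<phi> (\<lambda>n. sup (a n) (b n))"
    and "is_inf (range (\<lambda>n. sup (a n) (b n))) (sup x y)"
proof -
  have sd: "sigma_distributive TYPE('v)" and "sublattice L"
    using assms(1) by (simp_all add: valuation_system_def)
  moreover have am: "antimono a" and bm: "antimono b"
    using assms(2,3) by (simp_all add: phi_convergent_def)
  moreover have "antimono (\<lambda>n. sup (a n) (b n))"
    using am bm unfolding antimono_def by (meson sup_mono)
  ultimately show "is_inf (range (\<lambda>n. sup (a n) (b n))) (sup x y)"
    and "phi_convergent L \<phi> (\<lambda>n. sup (a n) (b n))"
    using assms is_inf_sup_seq[OF sd am bm] phi_convergent_inf_sup_values
    unfolding phi_convergent_def sublattice_def by blast+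
qed

lemma sublattice_PiL:
  assumes "valuation_system L \<phi>"
  shows "sublattice (PiL L \<phi>)"
  unfolding sublattice_def
proof (intro ballI conjI)
  fix x y assume "x \<in> PiL L \<phi>" "y \<in> PiL L \<phi>"
  then obtain a b where "phi_convergent L \<phi> a" "is_inf (range a) x"
    "phi_convergent L \<phi> b" "is_inf (range b) y" unfolding PiL_def by blast
  with assms show "inf x y \<in> PiL L \<phi>" "sup x y \<in> PiL L \<phi>"
    unfolding PiL_def
    by (blast intro: phi_convergent_inf is_inf_inf_seq phi_convergent_sup)+
qed

lemma PiL_decreasing_approximation:
  fixes X :: "nat \<Rightarrow> 'v::lattice"
  assumes vs: "valuation_system L \<phi>" and X: "antimono X" "\<And>k. X k \<in> PiL L \<phi>"
  obtains A where "\<And>k. phi_convergent L \<phi> (A k)" "\<And>k. is_inf (range (A k)) (X k)"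
    "\<And>k m n n'. k \<le> m \<Longrightarrow> n \<le> n' \<Longrightarrow> A m n' \<le> A k n"
proof -
  obtain a where a: "\<And>k. phi_convergent L \<phi> (a k) \<and> is_inf (range (a k)) (X k)"
  proof -
    have "\<forall>k. \<exists>a. phi_convergent L \<phi> a \<and> is_inf (range a) (X k)"
      using X(2) unfolding PiL_def by blast
    thus ?thesis using that by metis
  qed
  define A where "A = rec_nat (a 0) (\<lambda>k Ak n. inf (Ak n) (a (Suc k) n))"
  have A_Suc: "A (Suc k) = (\<lambda>n. inf (A k n) (a (Suc k) n))" for k
    by (simp add: A_def)
  have A: "phi_convergent L \<phi> (A k) \<and> is_inf (range (A k)) (X k)" for k
  proof (induction k)
    case 0 show ?case using a by (simp add: A_def)
  next
    case (Suc k)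
    have "inf (X k) (X (Suc k)) = X (Suc k)"
      using antimonoD[OF X(1), of k "Suc k"] by (simp add: inf_absorb2)
    moreover have "is_inf (range (\<lambda>n. inf (A k n) (a (Suc k) n))) (inf (X k) (X (Suc k)))"
      using Suc a[of "Suc k"] is_inf_inf_seq by blast
    moreover have "phi_convergent L \<phi> (\<lambda>n. inf (A k n) (a (Suc k) n))"
      using Suc a[of "Suc k"] phi_convergent_inf[OF vs] by blast
    ultimately show ?case unfolding A_Suc by simp
  qed
  moreover have "A m n' \<le> A k n" if "k \<le> m" "n \<le> n'" for k m n n'
  proof -
    have "antimono (\<lambda>k. A k n')" unfolding antimono_iff_le_Suc A_Suc by simp
    hence "A m n' \<le> A k n'" using \<open>k \<le> m\<close> by (rule antimonoD)
    also have "\<dots> \<le> A k n"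
      using A[of k] \<open>n \<le> n'\<close> by (simp add: phi_convergent_def antimonoD)
    finally show ?thesis .
  qed
  ultimately show ?thesis using that by blast
qed

lemma Pi_complete_PiL:
  fixes L :: "'v::lattice set" and \<phi> \<psi> :: "'v \<Rightarrow> 'e::ordered_ab_group_add"
  assumes vs: "valuation_system L \<phi>"
    and \<psi>: "\<And>a x. phi_convergent L \<phi> a \<Longrightarrow> is_inf (range a) x \<Longrightarrow>
              is_inf (range (\<lambda>n. \<phi> (a n))) (\<psi> x)"
  shows "Pi_complete (PiL L \<phi>) \<psi>"
  unfolding Pi_complete_def
proof (intro allI impI, elim conjE)
  fix X x assume cX: "phi_convergent (PiL L \<phi>) \<psi> X" and ix: "is_inf (range X) x"
  obtain e where ie: "is_inf (range (\<lambda>k. \<psi> (X k))) e"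
    using cX by (auto simp: phi_convergent_def)
  obtain A where A: "\<And>k. phi_convergent L \<phi> (A k)" "\<And>k. is_inf (range (A k)) (X k)"
    and anti: "\<And>k m n n'. k \<le> m \<Longrightarrow> n \<le> n' \<Longrightarrow> A m n' \<le> A k n"
    using PiL_decreasing_approximation[OF vs, of X] cX unfolding phi_convergent_def by blast
  have AL: "A k n \<in> L" for k n using A(1) by (simp add: phi_convergent_def)
  have mono: "\<phi> p \<le> \<phi> q" if "p \<in> L" "q \<in> L" "p \<le> q" for p q
    using vs that by (simp add: valuation_system_def valuation_def)
  let ?B = "\<lambda>n. A n n"
  have iB: "is_inf (range ?B) x"
    using is_inf_diagonal[OF anti A(2) ix] .
  have ieB: "is_inf (range (\<lambda>n. \<phi> (?B n))) e"
  proof (rule is_inf_diagonal[where A = "\<lambda>k n. \<phi> (A k n)", OF _ _ ie])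
    show "\<phi> (A m n') \<le> \<phi> (A k n)" if "k \<le> m" "n \<le> n'" for k m n n'
      using mono AL anti that by blast
    show "is_inf (range (\<lambda>n. \<phi> (A k n))) (\<psi> (X k))" for k
      using \<psi> A by blast
  qed
  have "antimono ?B" by (rule antimonoI) (simp add: anti)
  hence cB: "phi_convergent L \<phi> ?B"
    unfolding phi_convergent_def using AL iB ieB by blast
  have "\<psi> x = e" using \<psi>[OF cB iB] ieB by (rule is_inf_unique)
  thus "x \<in> PiL L \<phi> \<and> is_inf (range (\<lambda>k. \<psi> (X k))) (\<psi> x)"
    using cB iB ie unfolding PiL_def by blast
qed

lemma Pi_complete_extension_limits:
  fixes L C :: "'v::lattice set" and \<phi> \<psi> :: "'v \<Rightarrow> 'e::ordered_ab_group_add"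
  assumes "Pi_complete C \<psi>" "extends C \<psi> L \<phi>"
    and a: "phi_convergent L \<phi> a" and "is_inf (range a) x"
  shows "x \<in> C" "is_inf (range (\<lambda>n. \<phi> (a n))) (\<psi> x)"
proof -
  have "\<psi> (a n) = \<phi> (a n)" "a n \<in> C" for n
    using assms(2) a by (auto simp: extends_def phi_convergent_def)
  hence "phi_convergent C \<psi> a" "(\<lambda>n. \<psi> (a n)) = (\<lambda>n. \<phi> (a n))"
    using a by (auto simp: phi_convergent_def)
  thus "x \<in> C" "is_inf (range (\<lambda>n. \<phi> (a n))) (\<psi> x)"
    using assms(1,4) unfolding Pi_complete_def by metis+
qed

theorem mainTheorem4:
  fixes L :: "'v::lattice set" and \<phi> :: "'v \<Rightarrow> 'e::ordered_ab_group_add"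
  assumes "valuation_system L \<phi>"
  shows "Pi_extendible L \<phi> \<longleftrightarrow>
    (\<exists>(C::'v set) (\<psi>::'v \<Rightarrow> 'e). sublattice C \<and> valuation C \<psi> \<and>
        Pi_complete C \<psi> \<and> extends C \<psi> L \<phi>)"
proof
  assume "Pi_extendible L \<phi>"
  then obtain \<psi> :: "'v \<Rightarrow> 'e" where val: "valuation (PiL L \<phi>) \<psi>"
    and \<psi>: "\<And>a x. phi_convergent L \<phi> a \<Longrightarrow> is_inf (range a) x \<Longrightarrow>
              is_inf (range (\<lambda>n. \<phi> (a n))) (\<psi> x)"
    unfolding Pi_extendible_def by blast
  have "\<psi> c = \<phi> c" if "c \<in> L" for c
    using \<psi>[OF phi_convergent_const[OF that] is_inf_const] is_inf_const by (rule is_inf_unique)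
  hence "extends (PiL L \<phi>) \<psi> L \<phi>"
    using subset_PiL by (simp add: extends_def)
  moreover have "Pi_complete (PiL L \<phi>) \<psi>"
    using assms \<psi> by (rule Pi_complete_PiL)
  ultimately show "\<exists>C \<psi>. sublattice C \<and> valuation C \<psi> \<and> Pi_complete C \<psi> \<and> extends C \<psi> L \<phi>"
    using sublattice_PiL[OF assms] val by blast
next
  assume "\<exists>C \<psi>. sublattice C \<and> valuation C \<psi> \<and> Pi_complete C \<psi> \<and> extends C \<psi> L \<phi>"
  then obtain C and \<psi> :: "'v \<Rightarrow> 'e"
    where val: "valuation C \<psi>" and lim: "Pi_complete C \<psi>" "extends C \<psi> L \<phi>" by blast
  have "PiL L \<phi> \<subseteq> C"
    using Pi_complete_extension_limits(1)[OF lim] unfolding PiL_def by blast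
  with val have "valuation (PiL L \<phi>) \<psi>" by (rule valuation_subset)
  thus "Pi_extendible L \<phi>"
    using Pi_complete_extension_limits(2)[OF lim] unfolding Pi_extendible_def by blast
qed

end
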